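(* Let $f$ be a permutation of $\mathbb{F}_q$, extended to a permutation of $\mathbb{P}^1(\mathbb{F}_q)$ fixing $\infty$, and let $k\ge1$. If $$f=\mu(x)\circ x^{q-2}\circ(x-a_k)\circ x^{q-2}\circ(x-a_{k-1})\circ\cdots\circ x^{q-2}\circ(x-a_1)$$ with $a_1,\dots,a_k\in\mathbb{F}_q$ and $\mu\in\mathbb{F}_q(x)$ of degree one, then $\mu$ is a degree-one polynomial in $\mathbb{F}_q[x]$. Consequently the set of all such representations of $f$ (tuples $(\mu;a_1,\dots,a_k)$ with $\mu\in\mathbb{F}_q[x]$ of degree one) is in bijection with the set of all representations $f=\nu(x)\circ(b_1,\infty)\circ\cdots\circ(b_k,\infty)$ with $b_1,\dots,b_k\in\mathbb{F}_q$ and $\nu\in\mathbb{F}_q(x)$ of degree one.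
   Context: Let $q>2$ be a prime power, $\mathbb{F}_q$ the field with $q$ elements, $\mathbb{P}^1(\mathbb{F}_q)=\mathbb{F}_q\cup\{\infty\}$. Degree-one rational functions in $\mathbb{F}_q(x)$ act on $\mathbb{P}^1(\mathbb{F}_q)$ with the usual conventions. $x^{q-2}$ acts on $\mathbb{P}^1(\mathbb{F}_q)$ by fixing $0$ and $\infty$ and sending $c\in\mathbb{F}_q^*$ to $c^{-1}$. For $b\in\mathbb{F}_q$, $(b,\infty)$ is the transposition of $\mathbb{P}^1(\mathbb{F}_q)$ swapping $b$ and $\infty$. Composition is $(f\circ g)(x)=f(g(x))$, and equalities are of permutations of $\mathbb{P}^1(\mathbb{F}_q)$. *)

theory Defs
  imports "HOL-Computational_Algebra.Polynomial" "HOL-Computational_Algebra.Fraction_Field"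
          "HOL-Combinatorics.Transposition" "HOL-Library.Cardinality"
begin

text \<open>P^1(F_q) is modelled as 'a option, with None playing the role of infinity.
  Rational functions in F_q(x) are elements of the fraction field 'a poly fract.\<close>

definition deg1_ratfuns :: "('a::field) poly fract set" where
  "deg1_ratfuns = {Fract [:b, a:] [:d, c:] | a b c d. a * d - b * c \<noteq> 0}"

definition deg1_polys :: "('a::field) poly fract set" where
  "deg1_polys = {Fract p 1 | p. degree p = 1}"

definition mob_act :: "'a::field \<Rightarrow> 'a \<Rightarrow> 'a \<Rightarrow> 'a \<Rightarrow> 'a option \<Rightarrow> 'a option" where
  "mob_act a b c d p = (case p of
      None \<Rightarrow> (if c = 0 then None else Some (a / c))
    | Some x \<Rightarrow> (if c * x + d = 0 then None else Some ((a * x + b) / (c * x + d))))"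

definition ratfun_act :: "('a::field) poly fract \<Rightarrow> 'a option \<Rightarrow> 'a option" where
  "ratfun_act \<mu> = (SOME g. \<exists>a b c d. a * d - b * c \<noteq> 0 \<and>
       \<mu> = Fract [:b, a:] [:d, c:] \<and> g = mob_act a b c d)"

definition powinv :: "('a::{field,finite}) option \<Rightarrow> 'a option" where
  "powinv p = map_option (\<lambda>c. c ^ (CARD('a) - 2)) p"

definition shift :: "'a::field \<Rightarrow> 'a option \<Rightarrow> 'a option" where
  "shift a p = map_option (\<lambda>c. c - a) p"

text \<open>For as = [a_1,...,a_k]: x^(q-2) o (x - a_k) o ... o x^(q-2) o (x - a_1).\<close>
fun inv_chain :: "('a::{field,finite}) list \<Rightarrow> 'a option \<Rightarrow> 'a option" where
  "inv_chain [] = id"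
| "inv_chain (a # as) = inv_chain as \<circ> (powinv \<circ> shift a)"

text \<open>For bs = [b_1,...,b_k]: (b_1,inf) o ... o (b_k,inf).\<close>
fun transp_chain :: "'a list \<Rightarrow> 'a option \<Rightarrow> 'a option" where
  "transp_chain [] = id"
| "transp_chain (b # bs) = transpose (Some b) None \<circ> transp_chain bs"

definition reps_inv :: "(('a::{field,finite}) \<Rightarrow> 'a) \<Rightarrow> nat \<Rightarrow> ('a poly fract \<times> 'a list) set" where
  "reps_inv f k = {(\<mu>, as). \<mu> \<in> deg1_polys \<and> length as = k \<and>
       map_option f = ratfun_act \<mu> \<circ> inv_chain as}"

definition reps_transp :: "(('a::{field,finite}) \<Rightarrow> 'a) \<Rightarrow> nat \<Rightarrow> ('a poly fract \<times> 'a list) set" where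
  "reps_transp f k = {(\<nu>, bs). \<nu> \<in> deg1_ratfuns \<and> length bs = k \<and>
       map_option f = ratfun_act \<nu> \<circ> transp_chain bs}"

end

theory Submission
  imports Defs
begin

text \<open>On \<open>\<bbbP>\<^sup>1(\<bbbF>\<^sub>q)\<close> the map \<open>x\<^sup>q\<^sup>-\<^sup>2\<close> is \<open>c \<mapsto> c\<^sup>-\<^sup>1\<close> with \<open>0 \<mapsto> 0\<close>, so each block
  \<open>x\<^sup>q\<^sup>-\<^sup>2 \<circ> (x - a)\<close> equals the Moebius map \<open>1/(x - a)\<close> composed with the transposition
  \<open>(a,\<infinity>)\<close>. Conjugating a transposition by a Moebius map gives another transposition, so all
  Moebius factors can be collected on the left; this rewrites the chain as
  \<open>M \<circ> (b\<^sub>1,\<infinity>) \<circ> \<dots> \<circ> (b\<^sub>k,\<infinity>)\<close>, where \<open>(b\<^sub>i)\<close> depends bijectively on \<open>(a\<^sub>i)\<close>.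
  The chain fixes \<open>\<infinity>\<close>, hence so does \<open>\<mu>\<close>, which makes \<open>\<mu>\<close> a polynomial. Finally a
  degree-one rational function is determined by its action on \<open>\<bbbP>\<^sup>1\<close>: two matrices act
  alike iff the adjugate of one times the other is scalar, iff the fractions coincide.\<close>

lemma power_card_minus_one_eq_1:
  fixes c :: "'a::{field,finite}"
  assumes "c \<noteq> 0"
  shows "c ^ (CARD('a) - 1) = 1"
proof -
  let ?S = "UNIV - {0::'a}"
  have "bij_betw (\<lambda>x. c * x) ?S ?S"
    by (rule bij_betw_byWitness[where f'="\<lambda>x. inverse c * x"]) (use assms in auto)
  then have "(\<Prod>x\<in>?S. c * x) = (\<Prod>x\<in>?S. x)"
    using prod.reindex_bij_betw[of _ ?S ?S "\<lambda>x. x"] by simp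
  moreover have "(\<Prod>x\<in>?S. c * x) = c ^ card ?S * (\<Prod>x\<in>?S. x)"
    by (simp add: prod.distrib)
  moreover have "card ?S = CARD('a) - 1"
    by (simp add: card_Diff_singleton)
  ultimately show ?thesis by simp
qed

lemma power_card_minus_two_eq_inverse:
  fixes c :: "'a::{field,finite}"
  assumes "CARD('a) > 2"
  shows "c ^ (CARD('a) - 2) = inverse c"
proof (cases "c = 0")
  case True
  with assms show ?thesis by simp
next
  case False
  have "CARD('a) - 1 = Suc (CARD('a) - 2)" using assms by simp
  with power_card_minus_one_eq_1[OF False] have "c * c ^ (CARD('a) - 2) = 1" by simp
  with False show ?thesis by (simp add: field_simps)
qed

lemma powinv_comp_shift:
  assumes "CARD('a::{field,finite}) > 2"
  shows "powinv \<circ> shift a = map_option (\<lambda>x::'a. inverse (x - a))"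
  by (simp add: powinv_def shift_def power_card_minus_two_eq_inverse[OF assms]
      fun_eq_iff option.map_comp comp_def)

subsection \<open>Moebius maps\<close>

lemma mob_act_id: "t \<noteq> 0 \<Longrightarrow> mob_act t 0 0 t = id"
  by (auto simp: mob_act_def fun_eq_iff split: option.splits)

lemma mob_act_comp:
  fixes a b c d a' b' c' d' :: "'a::field"
  assumes "a*d - b*c \<noteq> 0" "a'*d' - b'*c' \<noteq> 0"
  shows "mob_act a b c d \<circ> mob_act a' b' c' d' =
         mob_act (a*a'+b*c') (a*b'+b*d') (c*a'+d*c') (c*b'+d*d')"
proof
  fix p
  show "(mob_act a b c d \<circ> mob_act a' b' c' d') p =
         mob_act (a*a'+b*c') (a*b'+b*d') (c*a'+d*c') (c*b'+d*d') p"
  proof (cases p)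
    case None
    show ?thesis
    proof (cases "c' = 0")
      case True
      with assms(2) have "a' \<noteq> 0" by auto
      with True None show ?thesis by (simp add: mob_act_def)
    next
      case False
      have "c*a'+d*c' = c' * (c * (a'/c') + d)" "a*a'+b*c' = c' * (a * (a'/c') + b)"
        using False by (simp_all add: field_simps)
      with False None show ?thesis by (simp add: mob_act_def)
    qed
  next
    case (Some x)
    show ?thesis
    proof (cases "c'*x + d' = 0")
      case True
      then have d': "d' = - c'*x" by (simp add: eq_neg_iff_add_eq_0 algebra_simps)
      have "a'*d' - b'*c' = - c' * (a'*x+b')" by (simp add: d' algebra_simps)
      with assms(2) have "a'*x+b' \<noteq> 0" "c' \<noteq> 0" by auto
      moreover have "(c*a' + d*c')*x + (c*b' + d*d') = c * (a'*x+b')"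
        "(a*a' + b*c')*x + (a*b' + b*d') = a * (a'*x+b')"
        by (simp_all add: d' algebra_simps)
      ultimately show ?thesis using True Some by (simp add: mob_act_def)
    next
      case False
      let ?y = "(a'*x+b')/(c'*x+d')"
      have "(c*a' + d*c')*x + (c*b' + d*d') = (c'*x+d') * (c * ?y + d)"
        "(a*a' + b*c')*x + (a*b' + b*d') = (c'*x+d') * (a * ?y + b)"
        using False by (simp_all add: field_simps)
      with False Some show ?thesis by (simp add: mob_act_def)
    qed
  qed
qed

lemma mob_act_eq_id_iff:
  fixes a b c d :: "'a::field"
  assumes "a*d - b*c \<noteq> 0"
  shows "mob_act a b c d = id \<longleftrightarrow> b = 0 \<and> c = 0 \<and> a = d"
proof
  assume id: "mob_act a b c d = id"
  from fun_cong[OF id, of None] have "c = 0" by (simp add: mob_act_def split: if_splits)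
  with assms have "d \<noteq> 0" by auto
  with fun_cong[OF id, of "Some 0"] fun_cong[OF id, of "Some 1"] \<open>c = 0\<close>
  show "b = 0 \<and> c = 0 \<and> a = d" by (simp add: mob_act_def)
next
  assume "b = 0 \<and> c = 0 \<and> a = d"
  with assms show "mob_act a b c d = id" by (auto intro: mob_act_id)
qed

lemma mob_act_adjugate_comp:
  fixes a b c d :: "'a::field"
  assumes "a*d - b*c \<noteq> 0"
  shows "mob_act d (-b) (-c) a \<circ> mob_act a b c d = id"
    and "mob_act a b c d \<circ> mob_act d (-b) (-c) a = id"
proof -
  have "d*a - (-b)*(-c) \<noteq> 0" using assms by (simp add: algebra_simps)
  with assms show "mob_act d (-b) (-c) a \<circ> mob_act a b c d = id"
    "mob_act a b c d \<circ> mob_act d (-b) (-c) a = id"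
    by (simp_all add: mob_act_comp mob_act_id[OF assms] algebra_simps)
qed

lemma mob_act_eq_iff:
  fixes a b c d a' b' c' d' :: "'a::field"
  assumes det: "a*d - b*c \<noteq> 0" and det': "a'*d' - b'*c' \<noteq> 0"
  shows "mob_act a b c d = mob_act a' b' c' d' \<longleftrightarrow>
     (b*d' = b'*d \<and> a*d' + b*c' = a'*d + b'*c \<and> a*c' = a'*c)"
proof -
  let ?adj = "mob_act d' (-b') (-c') a'"
  have adj_det: "d'*a' - (-b')*(-c') \<noteq> 0" using det' by (simp add: algebra_simps)
  have prod_det: "(d'*a + -b'*c) * (-c'*b + a'*d) - (d'*b + -b'*d) * (-c'*a + a'*c) \<noteq> 0"
  proof -
    have "(d'*a + -b'*c) * (-c'*b + a'*d) - (d'*b + -b'*d) * (-c'*a + a'*c)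
        = (a'*d' - b'*c') * (a*d - b*c)" by (simp add: algebra_simps)
    with det det' show ?thesis by simp
  qed
  have "mob_act a b c d = mob_act a' b' c' d' \<longleftrightarrow> ?adj \<circ> mob_act a b c d = id"
  proof
    assume "mob_act a b c d = mob_act a' b' c' d'"
    then show "?adj \<circ> mob_act a b c d = id" using mob_act_adjugate_comp(1)[OF det'] by simp
  next
    assume "?adj \<circ> mob_act a b c d = id"
    then have "mob_act a' b' c' d' \<circ> (?adj \<circ> mob_act a b c d) = mob_act a' b' c' d'" by simp
    then show "mob_act a b c d = mob_act a' b' c' d'"
      by (simp add: comp_assoc[symmetric] mob_act_adjugate_comp(2)[OF det'])
  qed
  also have "\<dots> \<longleftrightarrow> d'*b + -b'*d = 0 \<and> -c'*a + a'*c = 0 \<and> d'*a + -b'*c = -c'*b + a'*d"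
    by (simp only: mob_act_comp[OF adj_det det] mob_act_eq_id_iff[OF prod_det])
  also have "\<dots> \<longleftrightarrow> (b*d' = b'*d \<and> a*d' + b*c' = a'*d + b'*c \<and> a*c' = a'*c)"
    by (auto simp: algebra_simps)
  finally show ?thesis .
qed

definition moebius_maps :: "('a::field option \<Rightarrow> 'a option) set" where
  "moebius_maps = {mob_act a b c d | a b c d. a*d - b*c \<noteq> 0}"

lemma moebius_maps_comp: "g \<in> moebius_maps \<Longrightarrow> h \<in> moebius_maps \<Longrightarrow> g \<circ> h \<in> moebius_maps"
proof -
  assume "g \<in> moebius_maps" "h \<in> moebius_maps"
  then obtain a b c d a' b' c' d' where
    g: "a*d - b*c \<noteq> 0" "g = mob_act a b c d" and h: "a'*d' - b'*c' \<noteq> 0" "h = mob_act a' b' c' d'"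
    unfolding moebius_maps_def by blast
  have "(a*a'+b*c') * (c*b'+d*d') - (a*b'+b*d') * (c*a'+d*c') = (a*d - b*c) * (a'*d' - b'*c')"
    by (simp add: algebra_simps)
  with g(1) h(1) show ?thesis
    unfolding moebius_maps_def g(2) h(2) mob_act_comp[OF g(1) h(1)] by fastforce
qed

lemma moebius_maps_inv:
  assumes "g \<in> moebius_maps"
  shows "bij g" and "inv g \<in> moebius_maps"
proof -
  obtain a b c d where det: "a*d - b*c \<noteq> 0" and g: "g = mob_act a b c d"
    using assms unfolding moebius_maps_def by blast
  have "inv g = mob_act d (-b) (-c) a"
    using g mob_act_adjugate_comp[OF det] by (metis inv_unique_comp)
  moreover have "d*a - (-b)*(-c) \<noteq> 0" using det by (simp add: algebra_simps)
  ultimately show "inv g \<in> moebius_maps" unfolding moebius_maps_def by blast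
  show "bij g" using g mob_act_adjugate_comp[OF det] by (metis o_bij)
qed

subsection \<open>Degree-one rational functions and their action\<close>

lemma Fract_linear_eq_iff:
  fixes a b c d a' b' c' d' :: "'a::field"
  assumes "[:d,c:] \<noteq> 0" "[:d',c':] \<noteq> 0"
  shows "Fract [:b,a:] [:d,c:] = Fract [:b',a':] [:d',c':] \<longleftrightarrow>
     (b*d' = b'*d \<and> a*d' + b*c' = a'*d + b'*c \<and> a*c' = a'*c)"
proof -
  have "Fract [:b,a:] [:d,c:] = Fract [:b',a':] [:d',c':] \<longleftrightarrow>
      [:b,a:] * [:d',c':] = [:b',a':] * [:d,c:]"
    using assms by (simp add: eq_fract)
  also have "\<dots> \<longleftrightarrow> (b*d' = b'*d \<and> a*d' + b*c' = a'*d + b'*c \<and> a*c' = a'*c)"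
    by (auto simp: algebra_simps)
  finally show ?thesis .
qed

lemma mob_act_eq_iff_Fract_eq:
  fixes a b c d a' b' c' d' :: "'a::field"
  assumes det: "a*d - b*c \<noteq> 0" and det': "a'*d' - b'*c' \<noteq> 0"
  shows "mob_act a b c d = mob_act a' b' c' d' \<longleftrightarrow>
     Fract [:b,a:] [:d,c:] = Fract [:b',a':] [:d',c':]"
proof -
  have "[:d,c:] \<noteq> 0" "[:d',c':] \<noteq> 0" using det det' by auto
  then show ?thesis by (simp add: mob_act_eq_iff[OF det det'] Fract_linear_eq_iff)
qed

lemma ratfun_act_Fract:
  fixes a b c d :: "'a::field"
  assumes det: "a*d - b*c \<noteq> 0"
  shows "ratfun_act (Fract [:b,a:] [:d,c:]) = mob_act a b c d"
proof -
  have "\<exists>g a' b' c' d'. a'*d' - b'*c' \<noteq> 0 \<and>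
      Fract [:b,a:] [:d,c:] = Fract [:b',a':] [:d',c':] \<and> g = mob_act a' b' c' d'"
    using det by blast
  from someI_ex[OF this] obtain a' b' c' d' where det': "a'*d' - b'*c' \<noteq> 0"
    and "Fract [:b,a:] [:d,c:] = Fract [:b',a':] [:d',c':]"
    and "ratfun_act (Fract [:b,a:] [:d,c:]) = mob_act a' b' c' d'"
    unfolding ratfun_act_def by blast
  then show ?thesis using mob_act_eq_iff_Fract_eq[OF det det'] by simp
qed

lemma bij_betw_ratfun_act: "bij_betw ratfun_act deg1_ratfuns (moebius_maps :: ('a::field option \<Rightarrow> _) set)"
proof (rule bij_betw_imageI)
  show "inj_on ratfun_act (deg1_ratfuns :: 'a poly fract set)"
  proof (rule inj_onI)
    fix \<mu> \<nu> :: "'a poly fract"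
    assume "\<mu> \<in> deg1_ratfuns" "\<nu> \<in> deg1_ratfuns" and eq: "ratfun_act \<mu> = ratfun_act \<nu>"
    then obtain a b c d a' b' c' d' where
      det: "a*d - b*c \<noteq> 0" "\<mu> = Fract [:b,a:] [:d,c:]" and
      det': "a'*d' - b'*c' \<noteq> 0" "\<nu> = Fract [:b',a':] [:d',c':]"
      unfolding deg1_ratfuns_def by blast
    with eq show "\<mu> = \<nu>"
      by (simp add: ratfun_act_Fract mob_act_eq_iff_Fract_eq[OF det(1) det'(1), symmetric])
  qed
  have "ratfun_act ` deg1_ratfuns = {ratfun_act (Fract [:b,a:] [:d,c:]) | a b c d. a*d - b*c \<noteq> 0}"
    unfolding deg1_ratfuns_def by blast
  also have "\<dots> = moebius_maps"
    unfolding moebius_maps_def by (intro Collect_cong) (metis ratfun_act_Fract)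
  finally show "ratfun_act ` deg1_ratfuns = moebius_maps" .
qed

lemma deg1_polys_subset_deg1_ratfuns: "deg1_polys \<subseteq> deg1_ratfuns"
proof
  fix \<mu> :: "'a poly fract"
  assume "\<mu> \<in> deg1_polys"
  then obtain p where "degree p = 1" "\<mu> = Fract p 1" unfolding deg1_polys_def by blast
  moreover from \<open>degree p = 1\<close> obtain a b where "p = [:b, a:]" "a \<noteq> 0"
    by (rule degree1_coeffs)
  ultimately have "\<mu> = Fract [:b, a:] [:1, 0:]" "a * 1 - b * 0 \<noteq> 0"
    by (simp_all add: one_pCons)
  then show "\<mu> \<in> deg1_ratfuns" unfolding deg1_ratfuns_def by blast
qed

lemma deg1_polysI_fixes_infinity:
  assumes "\<mu> \<in> deg1_ratfuns" and "ratfun_act \<mu> None = None"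
  shows "\<mu> \<in> deg1_polys"
proof -
  obtain a b c d where det: "a*d - b*c \<noteq> 0" and \<mu>: "\<mu> = Fract [:b,a:] [:d,c:]"
    using assms(1) unfolding deg1_ratfuns_def by blast
  from assms(2) have "c = 0"
    by (simp add: \<mu> ratfun_act_Fract[OF det] mob_act_def split: if_splits)
  with det have "a \<noteq> 0" "d \<noteq> 0" by auto
  with \<open>c = 0\<close> have "\<mu> = Fract [:b/d, a/d:] 1" "degree [:b/d, a/d:] = 1"
    by (simp_all add: \<mu> eq_fract)
  then show ?thesis unfolding deg1_polys_def by blast
qed

subsection \<open>Rewriting the chain of inversions as a chain of transpositions\<close>

lemma map_option_inverse_shift_eq_mob_act:
  "map_option (\<lambda>x. inverse (x - a)) = mob_act 0 1 1 (-a) \<circ> transpose (Some (a::'a::field)) None"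
  by (auto simp: fun_eq_iff mob_act_def transpose_def divide_inverse split: option.split)

lemma transpose_comp_inj: "inj f \<Longrightarrow> transpose (f x) (f y) \<circ> f = f \<circ> transpose x y"
  by (auto simp: fun_eq_iff transpose_def inj_eq)

lemma transp_chain_comp_map_option:
  assumes "inj h" and "\<And>c. h (g c) = c"
  shows "transp_chain cs \<circ> map_option h = map_option h \<circ> transp_chain (map g cs)"
proof (induction cs)
  case Nil
  then show ?case by simp
next
  case (Cons c cs)
  have step: "transpose (Some c) None \<circ> map_option h = map_option h \<circ> transpose (Some (g c)) None"
    using transpose_comp_inj[of "map_option h" "Some (g c)" None] assms
    by (simp add: option.inj_map)
  have "transp_chain (c # cs) \<circ> map_option h = transpose (Some c) None \<circ> (transp_chain cs \<circ> map_option h)"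
    by (simp only: transp_chain.simps comp_assoc)
  also have "\<dots> = map_option h \<circ> transp_chain (map g (c # cs))"
    by (simp only: Cons.IH comp_assoc[symmetric] step) (simp only: comp_assoc list.map transp_chain.simps)
  finally show ?case .
qed

fun moebius_part :: "'a::field list \<Rightarrow> 'a option \<Rightarrow> 'a option" where
  "moebius_part [] = id"
| "moebius_part (a # as) = moebius_part as \<circ> mob_act 0 1 1 (-a)"

fun transp_params :: "'a::field list \<Rightarrow> 'a list" where
  "transp_params [] = []"
| "transp_params (a # as) = a # map (\<lambda>c. a + inverse c) (transp_params as)"

lemma moebius_part_in_moebius_maps: "moebius_part as \<in> moebius_maps"
proof (induction as)
  case Nil
  have "(1::'a) * 1 - 0 * 0 \<noteq> 0" "id = mob_act 1 0 0 (1::'a)" by (simp_all add: mob_act_id)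
  then show ?case unfolding moebius_maps_def moebius_part.simps by blast
next
  case (Cons a as)
  have "0 * (-a) - 1 * 1 \<noteq> (0::'a)" by simp
  then have "mob_act 0 1 1 (-a) \<in> moebius_maps" unfolding moebius_maps_def by blast
  with Cons.IH show ?case by (simp only: moebius_part.simps moebius_maps_comp)
qed

lemma inv_chain_eq_moebius_part_comp_transp_chain:
  assumes "CARD('a::{field,finite}) > 2"
  shows "inv_chain as = moebius_part as \<circ> transp_chain (transp_params (as :: 'a list))"
proof (induction as)
  case Nil
  then show ?case by simp
next
  case (Cons a as)
  have commute: "transp_chain (transp_params as) \<circ> map_option (\<lambda>x. inverse (x - a)) =
      map_option (\<lambda>x. inverse (x - a)) \<circ> transp_chain (map (\<lambda>c. a + inverse c) (transp_params as))"
    by (rule transp_chain_comp_map_option) (auto intro: injI)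
  have "inv_chain (a # as) =
      moebius_part as \<circ> (transp_chain (transp_params as) \<circ> map_option (\<lambda>x. inverse (x - a)))"
    by (simp only: inv_chain.simps Cons.IH powinv_comp_shift[OF assms] comp_assoc)
  also have "\<dots> = moebius_part (a # as) \<circ> transp_chain (transp_params (a # as))"
    unfolding commute by (simp only: map_option_inverse_shift_eq_mob_act moebius_part.simps
        transp_params.simps transp_chain.simps comp_assoc)
  finally show ?case .
qed

lemma length_transp_params [simp]: "length (transp_params as) = length as"
  by (induction as) auto

lemma bij_transp_params: "bij (transp_params :: 'a::field list \<Rightarrow> _)"
proof (rule bijI)
  show "inj (transp_params :: 'a list \<Rightarrow> _)"
  proof (rule injI)
    fix as bs :: "'a list"
    show "transp_params as = transp_params bs \<Longrightarrow> as = bs"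
    proof (induction as arbitrary: bs)
      case Nil
      then show ?case by (cases bs) auto
    next
      case (Cons a as)
      then obtain bs' where bs: "bs = a # bs'"
        and "map (\<lambda>c. a + inverse c) (transp_params as) = map (\<lambda>c. a + inverse c) (transp_params bs')"
        by (cases bs) auto
      moreover have "inj (\<lambda>c. a + inverse c)" by (rule injI) simp
      ultimately show ?case using Cons.IH by (simp add: inj_map_eq_map)
    qed
  qed
  show "surj (transp_params :: 'a list \<Rightarrow> _)"
  proof -
    have "bs \<in> range transp_params" for bs :: "'a list"
    proof (induction "length bs" arbitrary: bs)
      case 0
      then show ?case by (auto intro: image_eqI[of _ _ "[]"])
    next
      case (Suc n)
      then obtain b bs' where bs: "bs = b # bs'" by (cases bs) auto
      with Suc have "map (\<lambda>y. inverse (y - b)) bs' \<in> range transp_params" by simp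
      then obtain as where "transp_params as = map (\<lambda>y. inverse (y - b)) bs'" by (metis rangeE)
      then have "transp_params (b # as) = bs" by (simp add: bs comp_def)
      then show ?case by (metis rangeI)
    qed
    then show ?thesis by blast
  qed
qed

subsection \<open>Correspondence of representations\<close>

definition moebius_reps :: "('a::field option \<Rightarrow> 'a option) \<Rightarrow> ('a list \<Rightarrow> 'a option \<Rightarrow> 'a option)
    \<Rightarrow> nat \<Rightarrow> (('a option \<Rightarrow> 'a option) \<times> 'a list) set" where
  "moebius_reps F chain k = {(g, as). g \<in> moebius_maps \<and> length as = k \<and> F = g \<circ> chain as}"

lemma bij_betw_map_prod_fst:
  assumes "bij_betw h A B"
  shows "bij_betw (map_prod h id) {(x, y). x \<in> A \<and> P (h x) y} {(z, y). z \<in> B \<and> P z y}"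
proof (rule bij_betw_imageI)
  show "inj_on (map_prod h id) {(x, y). x \<in> A \<and> P (h x) y}"
    using bij_betw_imp_inj_on[OF assms] by (auto simp: inj_on_def)
  show "map_prod h id ` {(x, y). x \<in> A \<and> P (h x) y} = {(z, y). z \<in> B \<and> P z y}"
  proof (intro equalityI subsetI)
    fix p assume "p \<in> map_prod h id ` {(x, y). x \<in> A \<and> P (h x) y}"
    then show "p \<in> {(z, y). z \<in> B \<and> P z y}" using bij_betwE[OF assms] by auto
  next
    fix p assume "p \<in> {(z, y). z \<in> B \<and> P z y}"
    then obtain z y where "p = (z, y)" "z \<in> B" "P z y" by blast
    then show "p \<in> map_prod h id ` {(x, y). x \<in> A \<and> P (h x) y}"
      using bij_betw_inv_into_right[OF assms] bij_betw_apply[OF bij_betw_inv_into[OF assms]]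
      by (intro image_eqI[of _ _ "(inv_into A h z, y)"]) auto
  qed
qed

lemma bij_betw_reps_transp:
  "bij_betw (map_prod ratfun_act id) (reps_transp f k) (moebius_reps (map_option f) transp_chain k)"
  unfolding reps_transp_def moebius_reps_def
  by (rule bij_betw_map_prod_fst[OF bij_betw_ratfun_act,
        of "\<lambda>g bs. length bs = k \<and> map_option f = g \<circ> transp_chain bs"])

lemma inv_chain_None: "inv_chain as None = None"
  by (induction as) (auto simp: powinv_def shift_def)

lemma inv_chain_rep_in_deg1_polys:
  assumes "\<mu> \<in> deg1_ratfuns" and "map_option f = ratfun_act \<mu> \<circ> inv_chain as"
  shows "\<mu> \<in> deg1_polys"
proof (rule deg1_polysI_fixes_infinity[OF assms(1)])
  show "ratfun_act \<mu> None = None"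
    using fun_cong[OF assms(2), of None] by (simp add: inv_chain_None)
qed

lemma bij_betw_reps_inv:
  "bij_betw (map_prod ratfun_act id) (reps_inv f k) (moebius_reps (map_option f) inv_chain k)"
proof -
  have "reps_inv f k = {(\<mu>, as). \<mu> \<in> deg1_ratfuns \<and>
      length as = k \<and> map_option f = ratfun_act \<mu> \<circ> inv_chain as}"
    unfolding reps_inv_def
    using deg1_polys_subset_deg1_ratfuns inv_chain_rep_in_deg1_polys by blast
  then show ?thesis
    unfolding moebius_reps_def
    by (simp only: bij_betw_map_prod_fst[OF bij_betw_ratfun_act,
          of "\<lambda>g as. length as = k \<and> map_option f = g \<circ> inv_chain as"])
qed

lemma bij_betw_moebius_reps:
  assumes "CARD('a::{field,finite}) > 2"
  shows "bij_betw (\<lambda>(g, as). (g \<circ> moebius_part as, transp_params as))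
     (moebius_reps F inv_chain k) (moebius_reps F transp_chain k :: (_ \<times> 'a list) set)"
proof -
  define T :: "'a list \<Rightarrow> 'a list" where "T = transp_params"
  define M :: "'a list \<Rightarrow> 'a option \<Rightarrow> 'a option" where "M = moebius_part"
  have bij_T: "bij T" unfolding T_def by (rule bij_transp_params)
  have T: "inv T (T as) = as" "T (inv T bs) = bs" "length (T as) = length as" for as bs
    using inv_f_f[OF bij_is_inj[OF bij_T]] surj_f_inv_f[OF bij_is_surj[OF bij_T]]
    by (simp_all add: T_def)
  have M_in: "M as \<in> moebius_maps" for as
    unfolding M_def by (rule moebius_part_in_moebius_maps)
  have M: "M as \<circ> inv (M as) = id" "inv (M as) \<circ> M as = id" for as
    using moebius_maps_inv(1)[OF M_in]
    by (simp_all add: bij_is_inj bij_is_surj surj_iff[symmetric] inj_iff[symmetric])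
  then have M_cancel: "inv (M as) \<circ> (M as \<circ> g) = g" for as g
    by (simp add: comp_assoc[symmetric])
  have decomp: "inv_chain as = M as \<circ> transp_chain (T as)" for as
    unfolding M_def T_def by (rule inv_chain_eq_moebius_part_comp_transp_chain[OF assms])
  show ?thesis
    unfolding M_def[symmetric] T_def[symmetric]
  proof (rule bij_betw_byWitness[where f'="\<lambda>(h, bs). (h \<circ> inv (M (inv T bs)), inv T bs)"])
    show "\<forall>x\<in>moebius_reps F inv_chain k.
        (\<lambda>(h, bs). (h \<circ> inv (M (inv T bs)), inv T bs)) ((\<lambda>(g, as). (g \<circ> M as, T as)) x) = x"
      by (auto simp: T M(1) comp_assoc)
    show "\<forall>y\<in>moebius_reps F transp_chain k.
        (\<lambda>(g, as). (g \<circ> M as, T as)) ((\<lambda>(h, bs). (h \<circ> inv (M (inv T bs)), inv T bs)) y) = y"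
      by (auto simp: T M(2) comp_assoc)
    show "(\<lambda>(g, as). (g \<circ> M as, T as)) ` moebius_reps F inv_chain k \<subseteq> moebius_reps F transp_chain k"
      by (auto simp: moebius_reps_def decomp T(3) comp_assoc M_in moebius_maps_comp)
    show "(\<lambda>(h, bs). (h \<circ> inv (M (inv T bs)), inv T bs)) ` moebius_reps F transp_chain k
        \<subseteq> moebius_reps F inv_chain k"
    proof clarify
      fix h bs
      assume "(h, bs) \<in> moebius_reps F transp_chain k"
      then have "h \<in> moebius_maps" "length bs = k" "F = h \<circ> transp_chain bs"
        by (simp_all add: moebius_reps_def)
      moreover have "length (inv T bs) = length bs" by (metis T(2,3))
      ultimately show "(h \<circ> inv (M (inv T bs)), inv T bs) \<in> moebius_reps F inv_chain k"
        by (simp add: moebius_reps_def decomp T(2) comp_assoc M_cancel moebius_maps_comp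
            moebius_maps_inv(2)[OF M_in] del: comp_apply)
    qed
  qed
qed

theorem corollary4p1:
  fixes f :: "'a::{field,finite} \<Rightarrow> 'a" and k :: nat
  assumes "CARD('a) > 2" and "bij f" and "k \<ge> 1"
  shows "(\<forall>\<mu> as. \<mu> \<in> deg1_ratfuns \<and> length as = k \<and>
            map_option f = ratfun_act \<mu> \<circ> inv_chain as \<longrightarrow> \<mu> \<in> deg1_polys)
       \<and> (\<exists>\<phi>. bij_betw \<phi> (reps_inv f k) (reps_transp f k))"
proof
  show "\<forall>\<mu> as. \<mu> \<in> deg1_ratfuns \<and> length as = k \<and>
            map_option f = ratfun_act \<mu> \<circ> inv_chain as \<longrightarrow> \<mu> \<in> deg1_polys"
    using inv_chain_rep_in_deg1_polys by blast
  show "\<exists>\<phi>. bij_betw \<phi> (reps_inv f k) (reps_transp f k)"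
    using bij_betw_trans[OF bij_betw_reps_inv
        bij_betw_trans[OF bij_betw_moebius_reps[OF assms(1)] bij_betw_inv_into[OF bij_betw_reps_transp]]]
    by blast
qed

end
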